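(* Let $\mathcal L$ be a factorial and almost prolongable language over a finite alphabet, and suppose there is a real number $\alpha\ge1$ with $p(n)\sim n^\alpha$. Then the Rauzy digraphs $\vec R(n)$ of $\mathcal L$ converge to $\vec{\mathbf Z}$ in the Benjamini–Schramm sense.
   Context: $p(n)=|\mathcal L\cap\mathcal A^n|$; $f\sim g$ means $f(n)/g(n)\to1$. $\mathcal L$ is factorial if every subword of a word of $\mathcal L$ lies in $\mathcal L$; a word $v\in\mathcal L$ is left-prolongable (resp. right-prolongable) if $av\in\mathcal L$ (resp. $va\in\mathcal L$) for some letter $a$; $\mathcal L$ is almost prolongable if the proportions of left-prolongable and of right-prolongable words among words of length $n$ in $\mathcal L$ both tend to $1$. The Rauzy digraph $\vec R(n)$ has vertex set $\mathcal L\cap\mathcal A^n$ and, for each $aub\in\mathcal L\cap\mathcal A^{n+1}$ ($a,b$ letters), one arc from $au$ to $ub$. Convergence to $\vec{\mathbf Z}$ means: for each $r$, the proportion of vertices whose ball of radius $r$ is isomorphic to the ball of radius $r$ in the bi-infinite directed path (arcs $i\to i+1$) tends to $1$. *)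

theory Defs
  imports Complex_Main
begin

definition words_of_length :: "'a list set \<Rightarrow> nat \<Rightarrow> 'a list set" where
  "words_of_length L n = {w \<in> L. length w = n}"

definition complexity :: "'a list set \<Rightarrow> nat \<Rightarrow> nat" where
  "complexity L n = card (words_of_length L n)"

definition factorial_lang :: "'a list set \<Rightarrow> bool" where
  "factorial_lang L \<longleftrightarrow> (\<forall>w \<in> L. \<forall>u x v. w = u @ x @ v \<longrightarrow> x \<in> L)"

definition left_prolongable :: "'a set \<Rightarrow> 'a list set \<Rightarrow> 'a list \<Rightarrow> bool" where
  "left_prolongable A L v \<longleftrightarrow> (\<exists>a \<in> A. a # v \<in> L)"

definition right_prolongable :: "'a set \<Rightarrow> 'a list set \<Rightarrow> 'a list \<Rightarrow> bool" where
  "right_prolongable A L v \<longleftrightarrow> (\<exists>a \<in> A. v @ [a] \<in> L)"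

definition almost_prolongable :: "'a set \<Rightarrow> 'a list set \<Rightarrow> bool" where
  "almost_prolongable A L \<longleftrightarrow>
     (\<lambda>n. real (card {v \<in> words_of_length L n. left_prolongable A L v}) / real (complexity L n))
        \<longlonglongrightarrow> 1 \<and>
     (\<lambda>n. real (card {v \<in> words_of_length L n. right_prolongable A L v}) / real (complexity L n))
        \<longlonglongrightarrow> 1"

text \<open>Rauzy digraph of order n: vertices are the words of length n of L; there is an arc
  from au to ub for each word aub of length n+1 in L. Since aub is determined by the pair
  (au, ub), the arcs form a relation (possibly with loops).\<close>

definition rauzy_arc :: "'a list set \<Rightarrow> nat \<Rightarrow> 'a list \<Rightarrow> 'a list \<Rightarrow> bool" where
  "rauzy_arc L n v w \<longleftrightarrow>
     (\<exists>x \<in> words_of_length L (Suc n). v = take n x \<and> w = drop 1 x)"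

definition rauzy_ball :: "'a list set \<Rightarrow> nat \<Rightarrow> 'a list \<Rightarrow> nat \<Rightarrow> 'a list set" where
  "rauzy_ball L n v r =
     {w. \<exists>k \<le> r. (v, w) \<in> ({(x, y). rauzy_arc L n x y \<or> rauzy_arc L n y x}) ^^ k}"

text \<open>The ball of radius r around v is isomorphic (as a rooted digraph) to the ball of radius r
  around 0 in the bi-infinite directed path with arcs i \<rightarrow> i+1, i.e. to the path on
  {-r..r} rooted at 0.\<close>

definition ball_is_path :: "'a list set \<Rightarrow> nat \<Rightarrow> 'a list \<Rightarrow> nat \<Rightarrow> bool" where
  "ball_is_path L n v r \<longleftrightarrow>
     (\<exists>f :: int \<Rightarrow> 'a list.
        bij_betw f {- int r .. int r} (rauzy_ball L n v r) \<and> f 0 = v \<and>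
        (\<forall>i \<in> {- int r .. int r}. \<forall>j \<in> {- int r .. int r}.
            rauzy_arc L n (f i) (f j) \<longleftrightarrow> j = i + 1))"

definition rauzy_converges_to_Z :: "'a list set \<Rightarrow> bool" where
  "rauzy_converges_to_Z L \<longleftrightarrow>
     (\<forall>r. (\<lambda>n. real (card {v \<in> words_of_length L n. ball_is_path L n v r})
                 / real (complexity L n)) \<longlonglongrightarrow> 1)"

end

theory Submission
  imports Defs
begin

text \<open>Call a vertex of the Rauzy digraph regular if it has exactly one successor and exactly one
  predecessor. If all vertices in the r-ball around v are regular and none of them has a period
  d \<le> 2r+1, the ball is a directed path: walking along unique successors and predecessors from v
  exhausts the ball, and a repetition at distance d along the walk would make a word d-periodic,
  because every arc shifts a word by one letter.

  Counting extensions, the number of words of length n with out-degree \<noteq> 1 is at most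
  p(n) + p(n+1) - 2 #{right prolongable words}, which is o(p(n)) because L is almost prolongable
  and p(n+1)/p(n) \<rightarrow> 1 (as p(n) \<sim> n^\<alpha>); in-degrees are symmetric. Words with a period at most
  2r+1 are O(1) in number while p(n) \<rightarrow> \<infinity>. As each bad vertex lies in boundedly many r-balls,
  all but o(p(n)) vertices have a path as their r-ball.\<close>

definition rauzy_adj :: "'a list set \<Rightarrow> nat \<Rightarrow> ('a list \<times> 'a list) set" where
  "rauzy_adj L n = {(x, y). rauzy_arc L n x y \<or> rauzy_arc L n y x}"

lemma rauzy_ball_eq: "rauzy_ball L n v r = {w. \<exists>k\<le>r. (v, w) \<in> rauzy_adj L n ^^ k}"
  unfolding rauzy_ball_def rauzy_adj_def by simp

lemma rauzy_arc_length: "rauzy_arc L n u w \<Longrightarrow> length u = n \<and> length w = n"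
  unfolding rauzy_arc_def words_of_length_def by auto

lemma rauzy_arc_nth: "rauzy_arc L n u w \<Longrightarrow> Suc k < n \<Longrightarrow> w ! k = u ! Suc k"
  unfolding rauzy_arc_def words_of_length_def by auto

lemma take_in_words_of_length:
  "factorial_lang L \<Longrightarrow> x \<in> words_of_length L (Suc n) \<Longrightarrow> take n x \<in> words_of_length L n"
  unfolding words_of_length_def factorial_lang_def by (auto, metis append_Nil append_take_drop_id)

lemma drop_in_words_of_length:
  "factorial_lang L \<Longrightarrow> x \<in> words_of_length L (Suc n) \<Longrightarrow> drop 1 x \<in> words_of_length L n"
  unfolding words_of_length_def factorial_lang_def by (auto, metis append_Nil2 append_take_drop_id)

lemma rauzy_arc_in_words_of_length:
  "factorial_lang L \<Longrightarrow> rauzy_arc L n u w \<Longrightarrow> u \<in> words_of_length L n \<and> w \<in> words_of_length L n"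
  unfolding rauzy_arc_def using take_in_words_of_length drop_in_words_of_length by blast

lemma rauzy_ball_subset_words_of_length:
  assumes "factorial_lang L" "v \<in> words_of_length L n"
  shows "rauzy_ball L n v r \<subseteq> words_of_length L n"
proof
  fix u assume "u \<in> rauzy_ball L n v r"
  then obtain k where k: "(v, u) \<in> rauzy_adj L n ^^ k" unfolding rauzy_ball_eq by auto
  show "u \<in> words_of_length L n"
  proof (cases k)
    case 0 then show ?thesis using k assms(2) by simp
  next
    case (Suc m)
    then obtain y where "(y, u) \<in> rauzy_adj L n" using k by (auto elim: relpow_Suc_E)
    then show ?thesis using rauzy_arc_in_words_of_length[OF assms(1)] unfolding rauzy_adj_def by auto
  qed
qed

lemma rauzy_adj_relpow_sym: "(x, y) \<in> rauzy_adj L n ^^ k \<Longrightarrow> (y, x) \<in> rauzy_adj L n ^^ k"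
proof (induction k arbitrary: y)
  case 0 then show ?case by simp
next
  case (Suc k)
  then obtain z where "(x, z) \<in> rauzy_adj L n ^^ k" "(z, y) \<in> rauzy_adj L n" by auto
  moreover have "(y, z) \<in> rauzy_adj L n" using \<open>(z, y) \<in> rauzy_adj L n\<close> unfolding rauzy_adj_def by auto
  ultimately show ?case using Suc.IH relpow_Suc_I2 by metis
qed

lemma rauzy_ball_sym: "u \<in> rauzy_ball L n v r \<Longrightarrow> v \<in> rauzy_ball L n u r"
  unfolding rauzy_ball_eq using rauzy_adj_relpow_sym by blast

definition rauzy_succs :: "'a list set \<Rightarrow> nat \<Rightarrow> 'a list \<Rightarrow> 'a list set" where
  "rauzy_succs L n u = {w. rauzy_arc L n u w}"

definition rauzy_preds :: "'a list set \<Rightarrow> nat \<Rightarrow> 'a list \<Rightarrow> 'a list set" where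
  "rauzy_preds L n w = {u. rauzy_arc L n u w}"

definition rauzy_regular :: "'a list set \<Rightarrow> nat \<Rightarrow> 'a list \<Rightarrow> bool" where
  "rauzy_regular L n u \<longleftrightarrow> card (rauzy_succs L n u) = 1 \<and> card (rauzy_preds L n u) = 1"

definition rauzy_succ :: "'a list set \<Rightarrow> nat \<Rightarrow> 'a list \<Rightarrow> 'a list" where
  "rauzy_succ L n u = (THE w. rauzy_arc L n u w)"

definition rauzy_pred :: "'a list set \<Rightarrow> nat \<Rightarrow> 'a list \<Rightarrow> 'a list" where
  "rauzy_pred L n w = (THE u. rauzy_arc L n u w)"

lemma rauzy_arc_succ_iff:
  assumes "card (rauzy_succs L n u) = 1"
  shows "rauzy_arc L n u w \<longleftrightarrow> w = rauzy_succ L n u"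
proof -
  obtain w0 where "rauzy_succs L n u = {w0}" using assms card_1_singletonE by blast
  then have arc: "\<And>w. rauzy_arc L n u w \<longleftrightarrow> w = w0" unfolding rauzy_succs_def by blast
  then have "rauzy_succ L n u = w0" unfolding rauzy_succ_def by blast
  with arc show ?thesis by blast
qed

lemma rauzy_arc_pred_iff:
  assumes "card (rauzy_preds L n w) = 1"
  shows "rauzy_arc L n u w \<longleftrightarrow> u = rauzy_pred L n w"
proof -
  obtain u0 where "rauzy_preds L n w = {u0}" using assms card_1_singletonE by blast
  then have arc: "\<And>u. rauzy_arc L n u w \<longleftrightarrow> u = u0" unfolding rauzy_preds_def by blast
  then have "rauzy_pred L n w = u0" unfolding rauzy_pred_def by blast
  with arc show ?thesis by blast
qed

definition has_period :: "'a list \<Rightarrow> nat \<Rightarrow> bool" where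
  "has_period u d \<longleftrightarrow> (\<forall>k. k + d < length u \<longrightarrow> u ! k = u ! (k + d))"

text \<open>Away from regular vertices, rauzy_succ and rauzy_pred are unspecified values (THE of a
  non-unique description), so the walk is only used on balls of regular vertices.\<close>

definition rauzy_walk :: "'a list set \<Rightarrow> nat \<Rightarrow> 'a list \<Rightarrow> int \<Rightarrow> 'a list" where
  "rauzy_walk L n v i =
     (if 0 \<le> i then (rauzy_succ L n ^^ nat i) v else (rauzy_pred L n ^^ nat (- i)) v)"

lemma rauzy_walk_0 [simp]: "rauzy_walk L n v 0 = v"
  unfolding rauzy_walk_def by simp

lemma rauzy_walk_succ: "0 \<le> i \<Longrightarrow> rauzy_walk L n v (i + 1) = rauzy_succ L n (rauzy_walk L n v i)"
  unfolding rauzy_walk_def by (simp add: nat_add_distrib)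

lemma rauzy_walk_pred:
  assumes "i < 0"
  shows "rauzy_walk L n v i = rauzy_pred L n (rauzy_walk L n v (i + 1))"
proof -
  have "nat (- i) = Suc (nat (- (i + 1)))" using assms by simp
  moreover have "rauzy_walk L n v i = (rauzy_pred L n ^^ nat (- i)) v"
    using assms unfolding rauzy_walk_def by simp
  ultimately have "rauzy_walk L n v i = rauzy_pred L n ((rauzy_pred L n ^^ nat (- (i + 1))) v)"
    by simp
  also have "(rauzy_pred L n ^^ nat (- (i + 1))) v = rauzy_walk L n v (i + 1)"
    using assms unfolding rauzy_walk_def by (cases "i = -1") auto
  finally show ?thesis .
qed

context
  fixes L :: "'a list set" and n r :: nat and v :: "'a list"
  assumes regular: "\<And>u. u \<in> rauzy_ball L n v r \<Longrightarrow> rauzy_regular L n u"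
begin

lemma rauzy_walk_reaches:
  "m \<le> r \<Longrightarrow> (v, rauzy_walk L n v (int m)) \<in> rauzy_adj L n ^^ m
     \<and> (v, rauzy_walk L n v (- int m)) \<in> rauzy_adj L n ^^ m"
proof (induction m)
  case 0 then show ?case by simp
next
  case (Suc m)
  let ?x = "rauzy_walk L n v (int m)" and ?y = "rauzy_walk L n v (- int m)"
  have "m \<le> r" using Suc.prems by simp
  then have reach: "(v, ?x) \<in> rauzy_adj L n ^^ m" "(v, ?y) \<in> rauzy_adj L n ^^ m" using Suc by auto
  then have "rauzy_regular L n ?x" "rauzy_regular L n ?y"
    using regular \<open>m \<le> r\<close> unfolding rauzy_ball_eq by blast+
  then have "rauzy_arc L n ?x (rauzy_walk L n v (int (Suc m)))"
    "rauzy_arc L n (rauzy_walk L n v (- int (Suc m))) ?y"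
    using rauzy_walk_succ[of "int m"] rauzy_walk_pred[of "- int (Suc m)"]
    by (auto simp: rauzy_regular_def rauzy_arc_succ_iff rauzy_arc_pred_iff add.commute)
  then show ?case using reach unfolding rauzy_adj_def by auto
qed

lemma rauzy_walk_in_ball: "\<bar>i\<bar> \<le> int r \<Longrightarrow> rauzy_walk L n v i \<in> rauzy_ball L n v r"
  using rauzy_walk_reaches[of "nat \<bar>i\<bar>"] unfolding rauzy_ball_eq
  by (cases "0 \<le> i") (auto intro!: exI[of _ "nat \<bar>i\<bar>"])

lemma rauzy_walk_regular: "\<bar>i\<bar> \<le> int r \<Longrightarrow> rauzy_regular L n (rauzy_walk L n v i)"
  using regular rauzy_walk_in_ball by blast

lemma rauzy_arc_from_walk_iff:
  assumes "\<bar>i\<bar> \<le> int r"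
  shows "rauzy_arc L n (rauzy_walk L n v i) x \<longleftrightarrow> x = rauzy_walk L n v (i + 1)"
proof -
  have "rauzy_walk L n v (i + 1) = rauzy_succ L n (rauzy_walk L n v i)"
  proof (cases "0 \<le> i")
    case False
    then have "rauzy_arc L n (rauzy_walk L n v i) (rauzy_walk L n v (i + 1))"
      using rauzy_walk_regular[of "i + 1"] assms rauzy_walk_pred[of i]
      by (auto simp: rauzy_regular_def rauzy_arc_pred_iff)
    then show ?thesis
      using rauzy_walk_regular[OF assms] by (auto simp: rauzy_regular_def rauzy_arc_succ_iff)
  qed (rule rauzy_walk_succ)
  then show ?thesis
    using rauzy_walk_regular[OF assms] by (auto simp: rauzy_regular_def rauzy_arc_succ_iff)
qed

lemma rauzy_arc_to_walk_iff:
  assumes "\<bar>i\<bar> \<le> int r"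
  shows "rauzy_arc L n x (rauzy_walk L n v i) \<longleftrightarrow> x = rauzy_walk L n v (i - 1)"
proof -
  have "rauzy_walk L n v (i - 1) = rauzy_pred L n (rauzy_walk L n v i)"
  proof (cases "0 < i")
    case True
    then have "rauzy_arc L n (rauzy_walk L n v (i - 1)) (rauzy_walk L n v i)"
      using rauzy_arc_from_walk_iff[of "i - 1"] assms by simp
    then show ?thesis
      using rauzy_walk_regular[OF assms] by (auto simp: rauzy_regular_def rauzy_arc_pred_iff)
  qed (use rauzy_walk_pred[of "i - 1"] in simp)
  then show ?thesis
    using rauzy_walk_regular[OF assms] by (auto simp: rauzy_regular_def rauzy_arc_pred_iff)
qed

lemma rauzy_ball_subset_walk: "rauzy_ball L n v r \<subseteq> rauzy_walk L n v ` {- int r .. int r}"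
proof -
  have "k \<le> r \<Longrightarrow> (v, w) \<in> rauzy_adj L n ^^ k \<Longrightarrow> \<exists>i. \<bar>i\<bar> \<le> int k \<and> w = rauzy_walk L n v i"
    for k w
  proof (induction k arbitrary: w)
    case 0 then show ?case by (auto intro: exI[of _ 0])
  next
    case (Suc k)
    then obtain y where "(v, y) \<in> rauzy_adj L n ^^ k" "(y, w) \<in> rauzy_adj L n" by auto
    moreover obtain i where "\<bar>i\<bar> \<le> int k" "y = rauzy_walk L n v i"
      using Suc calculation(1) by auto
    ultimately have "w = rauzy_walk L n v (i + 1) \<or> w = rauzy_walk L n v (i - 1)"
      using Suc.prems rauzy_arc_from_walk_iff[of i] rauzy_arc_to_walk_iff[of i]
      unfolding rauzy_adj_def by auto
    then show ?case using \<open>\<bar>i\<bar> \<le> int k\<close> by (auto intro: exI[of _ "i + 1"] exI[of _ "i - 1"])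
  qed
  then show ?thesis unfolding rauzy_ball_eq by (force simp: abs_le_iff)
qed

lemma rauzy_walk_shift:
  "- int r \<le> i \<Longrightarrow> i + int m \<le> int r + 1 \<Longrightarrow> k + m < n \<Longrightarrow>
     rauzy_walk L n v (i + int m) ! k = rauzy_walk L n v i ! (k + m)"
proof (induction m arbitrary: k)
  case 0 then show ?case by simp
next
  case (Suc m)
  have "rauzy_arc L n (rauzy_walk L n v (i + int m)) (rauzy_walk L n v (i + int (Suc m)))"
    using rauzy_arc_from_walk_iff[of "i + int m"] Suc.prems by (simp add: ac_simps)
  then have "rauzy_walk L n v (i + int (Suc m)) ! k = rauzy_walk L n v (i + int m) ! Suc k"
    by (rule rauzy_arc_nth) (use Suc.prems in simp)
  also have "\<dots> = rauzy_walk L n v i ! (k + Suc m)" using Suc by simp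
  finally show ?case .
qed

text \<open>Injectivity up to index r+1, one beyond the ball, is what rules out an arc from the last
  vertex of the path back into the ball.\<close>

lemma inj_on_rauzy_walk:
  assumes aperiodic: "\<And>u d. u \<in> rauzy_ball L n v r \<Longrightarrow> 1 \<le> d \<Longrightarrow> d \<le> 2 * r + 1 \<Longrightarrow> \<not> has_period u d"
  shows "inj_on (rauzy_walk L n v) {- int r .. int r + 1}"
proof (rule ccontr)
  assume "\<not> ?thesis"
  then obtain i j where ij: "i \<in> {- int r .. int r + 1}" "j \<in> {- int r .. int r + 1}" "i < j"
    "rauzy_walk L n v i = rauzy_walk L n v j"
    unfolding inj_on_def by (metis linorder_neqE)
  define d where "d = nat (j - i)"
  have d: "1 \<le> d" "d \<le> 2 * r + 1" "j = i + int d" using ij unfolding d_def by auto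
  have "\<bar>i\<bar> \<le> int r" using ij by auto
  have "length (rauzy_walk L n v i) = n"
    using rauzy_arc_from_walk_iff[OF \<open>\<bar>i\<bar> \<le> int r\<close>] rauzy_arc_length by blast
  then have "has_period (rauzy_walk L n v i) d"
    using rauzy_walk_shift[of i d] ij d unfolding has_period_def by auto
  then show False using aperiodic rauzy_walk_in_ball[OF \<open>\<bar>i\<bar> \<le> int r\<close>] d by blast
qed

lemma ball_is_path_if_regular_aperiodic:
  assumes "\<And>u d. u \<in> rauzy_ball L n v r \<Longrightarrow> 1 \<le> d \<Longrightarrow> d \<le> 2 * r + 1 \<Longrightarrow> \<not> has_period u d"
  shows "ball_is_path L n v r"
  unfolding ball_is_path_def
proof (intro exI conjI ballI)
  have inj: "inj_on (rauzy_walk L n v) {- int r .. int r + 1}" by (rule inj_on_rauzy_walk[OF assms])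
  show "bij_betw (rauzy_walk L n v) {- int r .. int r} (rauzy_ball L n v r)"
    unfolding bij_betw_def using rauzy_ball_subset_walk rauzy_walk_in_ball
    by (auto intro: inj_on_subset[OF inj])
  show "rauzy_walk L n v 0 = v" by simp
  fix i j assume "i \<in> {- int r .. int r}" "j \<in> {- int r .. int r}"
  then show "rauzy_arc L n (rauzy_walk L n v i) (rauzy_walk L n v j) \<longleftrightarrow> j = i + 1"
    using rauzy_arc_from_walk_iff[of i] inj unfolding inj_on_def by auto
qed

end

lemma rauzy_adj_Image_subset:
  assumes "L \<subseteq> lists A"
  shows "rauzy_adj L n `` {x} \<subseteq> (\<lambda>a. drop 1 (x @ [a])) ` A \<union> (\<lambda>a. take n (a # x)) ` A"
proof
  fix w assume "w \<in> rauzy_adj L n `` {x}"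
  then obtain y where y: "y \<in> L" "length y = Suc n"
    and arc: "x = take n y \<and> w = drop 1 y \<or> w = take n y \<and> x = drop 1 y"
    unfolding rauzy_adj_def rauzy_arc_def words_of_length_def by auto
  have "y \<noteq> []" using y(2) by auto
  have "take n y = butlast y" using y(2) by (simp add: butlast_conv_take)
  then have snoc: "take n y @ [last y] = y" using \<open>y \<noteq> []\<close> by simp
  have cons: "hd y # drop 1 y = y" using \<open>y \<noteq> []\<close> by (cases y) auto
  have "last y \<in> A" "hd y \<in> A" using y(1) assms \<open>y \<noteq> []\<close> by auto
  from arc show "w \<in> (\<lambda>a. drop 1 (x @ [a])) ` A \<union> (\<lambda>a. take n (a # x)) ` A"
  proof
    assume "x = take n y \<and> w = drop 1 y"
    then have "w = drop 1 (x @ [last y])" using snoc by simp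
    then show ?thesis using \<open>last y \<in> A\<close> by blast
  next
    assume "w = take n y \<and> x = drop 1 y"
    then have "w = take n (hd y # x)" using cons by simp
    then show ?thesis using \<open>hd y \<in> A\<close> by blast
  qed
qed

lemma card_rauzy_adj_Image_le:
  assumes "finite A" "L \<subseteq> lists A"
  shows "finite (rauzy_adj L n `` {x}) \<and> card (rauzy_adj L n `` {x}) \<le> 2 * card A"
proof -
  let ?S = "(\<lambda>a. drop 1 (x @ [a])) ` A \<union> (\<lambda>a. take n (a # x)) ` A"
  have fin: "finite ?S" using assms(1) by simp
  have "card (rauzy_adj L n `` {x}) \<le> card ?S"
    by (rule card_mono[OF fin rauzy_adj_Image_subset[OF assms(2)]])
  also have "\<dots> \<le> card ((\<lambda>a. drop 1 (x @ [a])) ` A) + card ((\<lambda>a. take n (a # x)) ` A)"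
    by (rule card_Un_le)
  also have "\<dots> \<le> 2 * card A"
    using card_image_le[OF assms(1), of "\<lambda>a. drop 1 (x @ [a])"]
      card_image_le[OF assms(1), of "\<lambda>a. take n (a # x)"] by linarith
  finally show ?thesis using finite_subset[OF rauzy_adj_Image_subset[OF assms(2)] fin] by simp
qed

lemma card_rauzy_adj_relpow_Image_le:
  assumes "finite A" "L \<subseteq> lists A"
  shows "finite ((rauzy_adj L n ^^ k) `` {x}) \<and> card ((rauzy_adj L n ^^ k) `` {x}) \<le> (2 * card A) ^ k"
proof (induction k)
  case 0 then show ?case by simp
next
  case (Suc k)
  let ?X = "(rauzy_adj L n ^^ k) `` {x}"
  have eq: "(rauzy_adj L n ^^ Suc k) `` {x} = (\<Union>y\<in>?X. rauzy_adj L n `` {y})" by auto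
  have "card (\<Union>y\<in>?X. rauzy_adj L n `` {y}) \<le> (\<Sum>y\<in>?X. card (rauzy_adj L n `` {y}))"
    by (rule card_UN_le) (use Suc in simp)
  also have "\<dots> \<le> card ?X * (2 * card A)"
    using sum_bounded_above[of ?X "\<lambda>y. card (rauzy_adj L n `` {y})"] card_rauzy_adj_Image_le[OF assms]
    by simp
  also have "\<dots> \<le> (2 * card A) ^ Suc k" using Suc by simp
  finally show ?case using eq Suc card_rauzy_adj_Image_le[OF assms] by auto
qed

definition rauzy_ball_bound :: "'a set \<Rightarrow> nat \<Rightarrow> nat" where
  "rauzy_ball_bound A r = (\<Sum>k\<le>r. (2 * card A) ^ k)"

lemma card_rauzy_ball_le:
  assumes "finite A" "L \<subseteq> lists A"
  shows "finite (rauzy_ball L n v r) \<and> card (rauzy_ball L n v r) \<le> rauzy_ball_bound A r"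
proof -
  have eq: "rauzy_ball L n v r = (\<Union>k\<le>r. (rauzy_adj L n ^^ k) `` {v})"
    unfolding rauzy_ball_eq by auto
  have "card (\<Union>k\<le>r. (rauzy_adj L n ^^ k) `` {v}) \<le> (\<Sum>k\<le>r. card ((rauzy_adj L n ^^ k) `` {v}))"
    by (rule card_UN_le) simp
  also have "\<dots> \<le> rauzy_ball_bound A r"
    unfolding rauzy_ball_bound_def by (rule sum_mono) (use card_rauzy_adj_relpow_Image_le[OF assms] in auto)
  finally show ?thesis using eq card_rauzy_adj_relpow_Image_le[OF assms] by auto
qed

lemma card_vertices_near_le:
  assumes "finite A" "L \<subseteq> lists A" "finite S"
  shows "card {v \<in> V. \<exists>u\<in>S. u \<in> rauzy_ball L n v r} \<le> card S * rauzy_ball_bound A r"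
proof -
  have "{v \<in> V. \<exists>u\<in>S. u \<in> rauzy_ball L n v r} \<subseteq> (\<Union>u\<in>S. rauzy_ball L n u r)"
    using rauzy_ball_sym by fastforce
  then have "card {v \<in> V. \<exists>u\<in>S. u \<in> rauzy_ball L n v r} \<le> card (\<Union>u\<in>S. rauzy_ball L n u r)"
    by (rule card_mono[rotated]) (use assms card_rauzy_ball_le in blast)
  also have "\<dots> \<le> (\<Sum>u\<in>S. card (rauzy_ball L n u r))" by (rule card_UN_le[OF assms(3)])
  also have "\<dots> \<le> (\<Sum>u\<in>S. rauzy_ball_bound A r)"
    by (rule sum_mono) (use card_rauzy_ball_le[OF assms(1,2)] in blast)
  finally show ?thesis by simp
qed

lemma card_fibres_not_singleton_le:
  assumes "finite V" "finite X" "g ` X \<subseteq> V"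
  shows "card {u\<in>V. card {x\<in>X. g x = u} \<noteq> 1} + 2 * card {u\<in>V. \<exists>x\<in>X. g x = u}
           \<le> card V + card X"
proof -
  let ?F = "\<lambda>u. {x\<in>X. g x = u}"
  let ?bad = "\<lambda>u. if card (?F u) \<noteq> 1 then 1 else 0" and ?hit = "\<lambda>u. if ?F u \<noteq> {} then 1 else 0"
  have card_filter: "card {u\<in>V. P u} = (\<Sum>u\<in>V. if P u then 1 else 0)" for P
    using assms(1) by (simp add: sum.If_cases Int_def)
  have "card {u\<in>V. card (?F u) \<noteq> 1} + 2 * card {u\<in>V. ?F u \<noteq> {}} = (\<Sum>u\<in>V. ?bad u + 2 * ?hit u)"
    by (simp only: card_filter sum.distrib sum_distrib_left)
  also have "\<dots> \<le> (\<Sum>u\<in>V. 1 + card (?F u))"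
  proof (rule sum_mono)
    fix u
    show "?bad u + 2 * ?hit u \<le> 1 + card (?F u)"
    proof (cases "?F u = {}")
      case False
      then have "card (?F u) > 0" using assms(2) by (simp add: card_gt_0_iff)
      then show ?thesis using False by simp
    qed simp
  qed
  also have "\<dots> = card V + card (\<Union>u\<in>V. ?F u)"
    using assms by (subst card_UN_disjoint) (auto simp: sum_Suc)
  also have "(\<Union>u\<in>V. ?F u) = X" using assms(3) by auto
  finally show ?thesis by (simp add: Bex_def)
qed

lemma finite_words_of_length:
  "finite A \<Longrightarrow> L \<subseteq> lists A \<Longrightarrow> finite (words_of_length L n)"
  by (rule finite_subset[OF _ finite_lists_length_eq[of A n]]) (auto simp: words_of_length_def)

lemma take_drop_eqI: "take k xs = take k ys \<Longrightarrow> drop k xs = drop k ys \<Longrightarrow> xs = ys"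
  by (metis append_take_drop_id)

lemma card_rauzy_succs_eq:
  assumes "1 \<le> n"
  shows "card (rauzy_succs L n u) = card {x \<in> words_of_length L (Suc n). take n x = u}"
proof -
  have "inj_on (drop 1) {x \<in> words_of_length L (Suc n). take n x = u}"
  proof (rule inj_onI)
    fix x y assume xy: "x \<in> {x \<in> words_of_length L (Suc n). take n x = u}"
      "y \<in> {x \<in> words_of_length L (Suc n). take n x = u}" and drop_eq: "drop 1 x = drop 1 y"
    have "take 1 (take n x) = take 1 (take n y)" using xy by simp
    then have "take 1 x = take 1 y" using assms by (simp add: min_absorb1)
    then show "x = y" using drop_eq by (rule take_drop_eqI)
  qed
  moreover have "rauzy_succs L n u = drop 1 ` {x \<in> words_of_length L (Suc n). take n x = u}"
    unfolding rauzy_succs_def rauzy_arc_def by blast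
  ultimately show ?thesis by (simp add: card_image)
qed

lemma card_rauzy_preds_eq:
  assumes "1 \<le> n"
  shows "card (rauzy_preds L n w) = card {x \<in> words_of_length L (Suc n). drop 1 x = w}"
proof -
  have "inj_on (take n) {x \<in> words_of_length L (Suc n). drop 1 x = w}"
  proof (rule inj_onI)
    fix x y assume xy: "x \<in> {x \<in> words_of_length L (Suc n). drop 1 x = w}"
      "y \<in> {x \<in> words_of_length L (Suc n). drop 1 x = w}" and take_eq: "take n x = take n y"
    have "take 1 (take n x) = take 1 (take n y)" using take_eq by (rule arg_cong)
    then have "take 1 x = take 1 y" using assms by (simp add: min_absorb1)
    moreover have "drop 1 x = drop 1 y" using xy by simp
    ultimately show "x = y" by (rule take_drop_eqI)
  qed
  moreover have "rauzy_preds L n w = take n ` {x \<in> words_of_length L (Suc n). drop 1 x = w}"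
    unfolding rauzy_preds_def rauzy_arc_def by blast
  ultimately show ?thesis by (simp add: card_image)
qed

lemma right_prolongable_iff:
  assumes "L \<subseteq> lists A" "u \<in> words_of_length L n"
  shows "right_prolongable A L u \<longleftrightarrow> (\<exists>x\<in>words_of_length L (Suc n). take n x = u)"
proof
  assume "right_prolongable A L u"
  then obtain a where "u @ [a] \<in> L" unfolding right_prolongable_def by auto
  then show "\<exists>x\<in>words_of_length L (Suc n). take n x = u"
    using assms(2) by (intro bexI[of _ "u @ [a]"]) (auto simp: words_of_length_def)
next
  assume "\<exists>x\<in>words_of_length L (Suc n). take n x = u"
  then obtain x where x: "x \<in> L" "length x = Suc n" "take n x = u"
    unfolding words_of_length_def by auto
  then have "x \<noteq> []" "take n x = butlast x" by (auto simp: butlast_conv_take)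
  then have "u @ [last x] \<in> L" using x(1,3) by simp
  moreover have "last x \<in> A" using x(1) assms(1) \<open>x \<noteq> []\<close> by auto
  ultimately show "right_prolongable A L u" unfolding right_prolongable_def by blast
qed

lemma left_prolongable_iff:
  assumes "L \<subseteq> lists A" "u \<in> words_of_length L n"
  shows "left_prolongable A L u \<longleftrightarrow> (\<exists>x\<in>words_of_length L (Suc n). drop 1 x = u)"
proof
  assume "left_prolongable A L u"
  then obtain a where "a # u \<in> L" unfolding left_prolongable_def by auto
  then show "\<exists>x\<in>words_of_length L (Suc n). drop 1 x = u"
    using assms(2) by (intro bexI[of _ "a # u"]) (auto simp: words_of_length_def)
next
  assume "\<exists>x\<in>words_of_length L (Suc n). drop 1 x = u"
  then obtain x where x: "x \<in> L" "length x = Suc n" "drop 1 x = u"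
    unfolding words_of_length_def by auto
  then have "x \<noteq> []" by auto
  then have "hd x # u \<in> L" using x(1,3) by (cases x) auto
  moreover have "hd x \<in> A" using x(1) assms(1) \<open>x \<noteq> []\<close> by auto
  ultimately show "left_prolongable A L u" unfolding left_prolongable_def by blast
qed

lemma card_out_irregular_le:
  assumes "finite A" "L \<subseteq> lists A" "factorial_lang L" "1 \<le> n"
  shows "card {u \<in> words_of_length L n. card (rauzy_succs L n u) \<noteq> 1}
           + 2 * card {u \<in> words_of_length L n. right_prolongable A L u}
         \<le> complexity L n + complexity L (Suc n)"
proof -
  have irregular: "{u \<in> words_of_length L n. card (rauzy_succs L n u) \<noteq> 1}
      = {u \<in> words_of_length L n. card {x \<in> words_of_length L (Suc n). take n x = u} \<noteq> 1}"
    by (simp only: card_rauzy_succs_eq[OF assms(4)])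
  have prolongable: "{u \<in> words_of_length L n. right_prolongable A L u}
      = {u \<in> words_of_length L n. \<exists>x\<in>words_of_length L (Suc n). take n x = u}"
    using right_prolongable_iff[OF assms(2)] by auto
  have "(take n) ` words_of_length L (Suc n) \<subseteq> words_of_length L n"
    using take_in_words_of_length[OF assms(3)] by blast
  from card_fibres_not_singleton_le[OF finite_words_of_length[OF assms(1,2)]
      finite_words_of_length[OF assms(1,2)] this]
  show ?thesis unfolding complexity_def irregular prolongable .
qed

lemma card_in_irregular_le:
  assumes "finite A" "L \<subseteq> lists A" "factorial_lang L" "1 \<le> n"
  shows "card {u \<in> words_of_length L n. card (rauzy_preds L n u) \<noteq> 1}
           + 2 * card {u \<in> words_of_length L n. left_prolongable A L u}
         \<le> complexity L n + complexity L (Suc n)"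
proof -
  have irregular: "{u \<in> words_of_length L n. card (rauzy_preds L n u) \<noteq> 1}
      = {u \<in> words_of_length L n. card {x \<in> words_of_length L (Suc n). drop 1 x = u} \<noteq> 1}"
    by (simp only: card_rauzy_preds_eq[OF assms(4)])
  have prolongable: "{u \<in> words_of_length L n. left_prolongable A L u}
      = {u \<in> words_of_length L n. \<exists>x\<in>words_of_length L (Suc n). drop 1 x = u}"
    using left_prolongable_iff[OF assms(2)] by auto
  have "(drop 1) ` words_of_length L (Suc n) \<subseteq> words_of_length L n"
    using drop_in_words_of_length[OF assms(3)] by blast
  from card_fibres_not_singleton_le[OF finite_words_of_length[OF assms(1,2)]
      finite_words_of_length[OF assms(1,2)] this]
  show ?thesis unfolding complexity_def irregular prolongable .
qed

lemma has_period_nth_mod: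
  assumes "has_period u d" "1 \<le> d"
  shows "k < length u \<Longrightarrow> u ! k = u ! (k mod d)"
proof (induction k rule: less_induct)
  case (less k)
  show ?case
  proof (cases "k < d")
    case False
    then have "u ! (k - d) = u ! k" using assms(1) less.prems unfolding has_period_def
      by (metis le_add_diff_inverse2 not_less)
    moreover have "u ! (k - d) = u ! ((k - d) mod d)" using less False assms(2) by simp
    ultimately show ?thesis using False by (simp add: mod_if)
  qed simp
qed

lemma card_periodic_words_le:
  assumes "finite A" "1 \<le> d" "d \<le> n"
  shows "card {u. set u \<subseteq> A \<and> length u = n \<and> has_period u d} \<le> card A ^ d"
proof -
  let ?P = "{u. set u \<subseteq> A \<and> length u = n \<and> has_period u d}"
  have "inj_on (take d) ?P"
  proof (rule inj_onI)
    fix u w assume u: "u \<in> ?P" and w: "w \<in> ?P" and prefix: "take d u = take d w"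
    show "u = w"
    proof (rule nth_equalityI)
      show "length u = length w" using u w by simp
      fix k assume "k < length u"
      moreover have "k mod d < d" using assms(2) by simp
      ultimately show "u ! k = w ! k"
        using has_period_nth_mod[of u d k] has_period_nth_mod[of w d k] u w assms(2,3)
          nth_take[of "k mod d" d u] nth_take[of "k mod d" d w] prefix by simp
    qed
  qed
  moreover have "take d ` ?P \<subseteq> {s. set s \<subseteq> A \<and> length s = d}"
    using assms(3) by (auto dest: in_set_takeD)
  ultimately have "card ?P \<le> card {s. set s \<subseteq> A \<and> length s = d}"
    using finite_lists_length_eq[OF assms(1)] by (rule card_inj_on_le)
  then show ?thesis by (simp only: card_lists_length_eq[OF assms(1)])
qed

lemma card_short_periodic_le:
  assumes "finite A" "L \<subseteq> lists A" "2 * r + 1 \<le> n"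
  shows "card {u \<in> words_of_length L n. \<exists>d\<in>{1..2 * r + 1}. has_period u d}
           \<le> (\<Sum>d = 1..2 * r + 1. card A ^ d)"
proof -
  let ?P = "\<lambda>d. {u. set u \<subseteq> A \<and> length u = n \<and> has_period u d}"
  have "{u \<in> words_of_length L n. \<exists>d\<in>{1..2 * r + 1}. has_period u d} \<subseteq> (\<Union>d\<in>{1..2 * r + 1}. ?P d)"
    using assms(2) by (auto simp: words_of_length_def)
  moreover have "finite (?P d)" for d
    by (rule finite_subset[OF _ finite_lists_length_eq[OF assms(1), of n]]) auto
  ultimately have "card {u \<in> words_of_length L n. \<exists>d\<in>{1..2 * r + 1}. has_period u d}
      \<le> card (\<Union>d\<in>{1..2 * r + 1}. ?P d)"
    by (intro card_mono) auto
  also have "\<dots> \<le> (\<Sum>d = 1..2 * r + 1. card (?P d))" by (rule card_UN_le) simp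
  also have "\<dots> \<le> (\<Sum>d = 1..2 * r + 1. card A ^ d)"
    by (rule sum_mono) (use card_periodic_words_le[OF assms(1)] assms(3) in auto)
  finally show ?thesis .
qed

lemma card_not_ball_is_path_le:
  assumes "finite A" "L \<subseteq> lists A" "factorial_lang L"
  shows "card {v \<in> words_of_length L n. \<not> ball_is_path L n v r}
    \<le> (card {u \<in> words_of_length L n. card (rauzy_succs L n u) \<noteq> 1}
        + card {u \<in> words_of_length L n. card (rauzy_preds L n u) \<noteq> 1}
        + card {u \<in> words_of_length L n. \<exists>d\<in>{1..2 * r + 1}. has_period u d})
       * rauzy_ball_bound A r"
    (is "_ \<le> (card ?O + card ?I + card ?P) * _")
proof -
  let ?S = "?O \<union> ?I \<union> ?P"
  have fin: "finite ?S" using finite_words_of_length[OF assms(1,2)] by auto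
  have "{v \<in> words_of_length L n. \<not> ball_is_path L n v r}
      \<subseteq> {v \<in> words_of_length L n. \<exists>u\<in>?S. u \<in> rauzy_ball L n v r}"
  proof safe
    fix v assume v: "v \<in> words_of_length L n" "\<not> ball_is_path L n v r"
    then obtain u where u: "u \<in> rauzy_ball L n v r"
      "\<not> rauzy_regular L n u \<or> (\<exists>d\<in>{1..2 * r + 1}. has_period u d)"
      using ball_is_path_if_regular_aperiodic[of L n v r] by force
    moreover have "u \<in> words_of_length L n"
      using rauzy_ball_subset_words_of_length[OF assms(3) v(1)] u(1) by blast
    ultimately show "\<exists>u\<in>?S. u \<in> rauzy_ball L n v r" unfolding rauzy_regular_def by blast
  qed
  then have "card {v \<in> words_of_length L n. \<not> ball_is_path L n v r}
      \<le> card {v \<in> words_of_length L n. \<exists>u\<in>?S. u \<in> rauzy_ball L n v r}"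
    by (rule card_mono[rotated]) (use finite_words_of_length[OF assms(1,2)] in simp)
  also have "\<dots> \<le> card ?S * rauzy_ball_bound A r" by (rule card_vertices_near_le[OF assms(1,2) fin])
  also have "\<dots> \<le> (card ?O + card ?I + card ?P) * rauzy_ball_bound A r"
    using card_Un_le[of "?O \<union> ?I" ?P] card_Un_le[of ?O ?I] by (intro mult_right_mono) simp_all
  finally show ?thesis .
qed

lemma deficit_fraction_tendsto_0:
  fixes p R B :: "nat \<Rightarrow> real"
  assumes ratio: "(\<lambda>n. p (Suc n) / p n) \<longlonglongrightarrow> 1" and prolongable: "(\<lambda>n. R n / p n) \<longlonglongrightarrow> 1"
    and pos: "eventually (\<lambda>n. 0 < p n) sequentially"
    and bound: "eventually (\<lambda>n. 0 \<le> B n \<and> B n + 2 * R n \<le> p n + p (Suc n)) sequentially"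
  shows "(\<lambda>n. B n / p n) \<longlonglongrightarrow> 0"
proof (rule tendsto_sandwich[of "\<lambda>_. 0" _ _ "\<lambda>n. 1 + p (Suc n) / p n - 2 * (R n / p n)"])
  show "eventually (\<lambda>n. 0 \<le> B n / p n) sequentially"
    using pos bound by eventually_elim simp
  show "eventually (\<lambda>n. B n / p n \<le> 1 + p (Suc n) / p n - 2 * (R n / p n)) sequentially"
    using pos bound
  proof eventually_elim
    case (elim n)
    then have "B n / p n \<le> (p n + p (Suc n) - 2 * R n) / p n" by (intro divide_right_mono) auto
    also have "\<dots> = 1 + p (Suc n) / p n - 2 * (R n / p n)" using elim by (simp add: field_simps)
    finally show ?case .
  qed
  have "(\<lambda>n. 1 + p (Suc n) / p n - 2 * (R n / p n)) \<longlonglongrightarrow> 1 + 1 - 2 * 1"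
    by (intro tendsto_intros ratio prolongable)
  then show "(\<lambda>n. 1 + p (Suc n) / p n - 2 * (R n / p n)) \<longlonglongrightarrow> 0" by simp
qed (rule tendsto_const)

lemma bounded_fraction_tendsto_0:
  fixes p B :: "nat \<Rightarrow> real"
  assumes "filterlim p at_top sequentially"
    and "eventually (\<lambda>n. 0 \<le> B n \<and> B n \<le> c) sequentially"
  shows "(\<lambda>n. B n / p n) \<longlonglongrightarrow> 0"
proof (rule tendsto_sandwich[of "\<lambda>_. 0" _ _ "\<lambda>n. c / p n"])
  have pos: "eventually (\<lambda>n. 0 < p n) sequentially"
    using assms(1) by (simp add: filterlim_at_top_dense)
  show "eventually (\<lambda>n. 0 \<le> B n / p n) sequentially"
    using pos assms(2) by eventually_elim simp
  show "eventually (\<lambda>n. B n / p n \<le> c / p n) sequentially"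
    using pos assms(2) by eventually_elim (simp add: divide_right_mono)
  show "(\<lambda>n. c / p n) \<longlonglongrightarrow> 0"
    by (rule tendsto_divide_0[OF tendsto_const filterlim_at_top_imp_at_infinity[OF assms(1)]])
qed (rule tendsto_const)

lemma out_irregular_fraction_tendsto_0:
  assumes "finite A" "L \<subseteq> lists A" "factorial_lang L" "almost_prolongable A L"
    and "filterlim (\<lambda>n. real (complexity L n)) at_top sequentially"
    and "(\<lambda>n. real (complexity L (Suc n)) / real (complexity L n)) \<longlonglongrightarrow> 1"
  shows "(\<lambda>n. real (card {u \<in> words_of_length L n. card (rauzy_succs L n u) \<noteq> 1})
              / real (complexity L n)) \<longlonglongrightarrow> 0"
proof (rule deficit_fraction_tendsto_0[OF assms(6)])
  show "(\<lambda>n. real (card {v \<in> words_of_length L n. right_prolongable A L v})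
      / real (complexity L n)) \<longlonglongrightarrow> 1"
    using assms(4) unfolding almost_prolongable_def by blast
  show "eventually (\<lambda>n. 0 < real (complexity L n)) sequentially"
    using assms(5) unfolding filterlim_at_top_dense by blast
  show "eventually (\<lambda>n. 0 \<le> real (card {u \<in> words_of_length L n. card (rauzy_succs L n u) \<noteq> 1})
      \<and> real (card {u \<in> words_of_length L n. card (rauzy_succs L n u) \<noteq> 1})
        + 2 * real (card {v \<in> words_of_length L n. right_prolongable A L v})
        \<le> real (complexity L n) + real (complexity L (Suc n))) sequentially"
    using eventually_ge_at_top[of 1] by eventually_elim
      (use of_nat_mono[OF card_out_irregular_le[OF assms(1-3)]] in simp)
qed

lemma in_irregular_fraction_tendsto_0:
  assumes "finite A" "L \<subseteq> lists A" "factorial_lang L" "almost_prolongable A L"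
    and "filterlim (\<lambda>n. real (complexity L n)) at_top sequentially"
    and "(\<lambda>n. real (complexity L (Suc n)) / real (complexity L n)) \<longlonglongrightarrow> 1"
  shows "(\<lambda>n. real (card {u \<in> words_of_length L n. card (rauzy_preds L n u) \<noteq> 1})
              / real (complexity L n)) \<longlonglongrightarrow> 0"
proof (rule deficit_fraction_tendsto_0[OF assms(6)])
  show "(\<lambda>n. real (card {v \<in> words_of_length L n. left_prolongable A L v})
      / real (complexity L n)) \<longlonglongrightarrow> 1"
    using assms(4) unfolding almost_prolongable_def by blast
  show "eventually (\<lambda>n. 0 < real (complexity L n)) sequentially"
    using assms(5) unfolding filterlim_at_top_dense by blast
  show "eventually (\<lambda>n. 0 \<le> real (card {u \<in> words_of_length L n. card (rauzy_preds L n u) \<noteq> 1})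
      \<and> real (card {u \<in> words_of_length L n. card (rauzy_preds L n u) \<noteq> 1})
        + 2 * real (card {v \<in> words_of_length L n. left_prolongable A L v})
        \<le> real (complexity L n) + real (complexity L (Suc n))) sequentially"
    using eventually_ge_at_top[of 1] by eventually_elim
      (use of_nat_mono[OF card_in_irregular_le[OF assms(1-3)]] in simp)
qed

lemma short_periodic_fraction_tendsto_0:
  assumes "finite A" "L \<subseteq> lists A"
    and "filterlim (\<lambda>n. real (complexity L n)) at_top sequentially"
  shows "(\<lambda>n. real (card {u \<in> words_of_length L n. \<exists>d\<in>{1..2 * r + 1}. has_period u d})
              / real (complexity L n)) \<longlonglongrightarrow> 0"
  using assms(3) by (rule bounded_fraction_tendsto_0)
    (use eventually_ge_at_top[of "2 * r + 1"] in \<open>eventually_elim, use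
      of_nat_mono[OF card_short_periodic_le[OF assms(1,2)]] in simp\<close>)

lemma not_ball_is_path_fraction_tendsto_0:
  assumes "finite A" "L \<subseteq> lists A" "factorial_lang L" "almost_prolongable A L"
    and unbounded: "filterlim (\<lambda>n. real (complexity L n)) at_top sequentially"
    and "(\<lambda>n. real (complexity L (Suc n)) / real (complexity L n)) \<longlonglongrightarrow> 1"
  shows "(\<lambda>n. real (card {v \<in> words_of_length L n. \<not> ball_is_path L n v r})
              / real (complexity L n)) \<longlonglongrightarrow> 0"
proof -
  define p where "p n = real (complexity L n)" for n
  define out where "out n = real (card {u \<in> words_of_length L n. card (rauzy_succs L n u) \<noteq> 1})" for n
  define inn where "inn n = real (card {u \<in> words_of_length L n. card (rauzy_preds L n u) \<noteq> 1})" for n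
  define per where "per n = real (card {u \<in> words_of_length L n. \<exists>d\<in>{1..2 * r + 1}. has_period u d})"
    for n
  define C where "C = real (rauzy_ball_bound A r)"
  have "(\<lambda>n. C * (out n / p n + inn n / p n + per n / p n)) \<longlonglongrightarrow> C * (0 + 0 + 0)"
    unfolding out_def inn_def per_def p_def
    by (intro tendsto_intros out_irregular_fraction_tendsto_0[OF assms]
        in_irregular_fraction_tendsto_0[OF assms] short_periodic_fraction_tendsto_0[OF assms(1,2,5)])
  then have upper: "(\<lambda>n. C * (out n / p n + inn n / p n + per n / p n)) \<longlonglongrightarrow> 0" by simp
  have pos: "eventually (\<lambda>n. 0 < p n) sequentially"
    using unbounded[folded p_def] unfolding filterlim_at_top_dense by blast
  then have "eventually (\<lambda>n. real (card {v \<in> words_of_length L n. \<not> ball_is_path L n v r}) / p n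
      \<le> C * (out n / p n + inn n / p n + per n / p n)) sequentially"
  proof eventually_elim
    case (elim n)
    have "real (card {v \<in> words_of_length L n. \<not> ball_is_path L n v r}) \<le> C * (out n + inn n + per n)"
      using of_nat_mono[OF card_not_ball_is_path_le[OF assms(1-3), of n r]]
      by (simp add: C_def out_def inn_def per_def mult.commute)
    then show ?case using elim by (simp add: divide_right_mono add_divide_distrib[symmetric])
  qed
  moreover have "eventually (\<lambda>n. 0 \<le> real (card {v \<in> words_of_length L n. \<not> ball_is_path L n v r}) / p n)
      sequentially"
    using pos by eventually_elim simp
  ultimately show ?thesis
    unfolding p_def[symmetric] by (intro tendsto_sandwich[OF _ _ tendsto_const upper])
qed

lemma rauzy_converges_to_Z_if_complexity_ratio_tendsto_1:
  assumes "finite A" "L \<subseteq> lists A" "factorial_lang L" "almost_prolongable A L"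
    and unbounded: "filterlim (\<lambda>n. real (complexity L n)) at_top sequentially"
    and "(\<lambda>n. real (complexity L (Suc n)) / real (complexity L n)) \<longlonglongrightarrow> 1"
  shows "rauzy_converges_to_Z L"
  unfolding rauzy_converges_to_Z_def
proof
  fix r
  let ?good = "\<lambda>n. real (card {v \<in> words_of_length L n. ball_is_path L n v r})"
  let ?bad = "\<lambda>n. real (card {v \<in> words_of_length L n. \<not> ball_is_path L n v r})"
  have lim: "(\<lambda>n. 1 - ?bad n / real (complexity L n)) \<longlonglongrightarrow> 1 - 0"
    by (intro tendsto_intros not_ball_is_path_fraction_tendsto_0[OF assms])
  have "eventually (\<lambda>n. 0 < real (complexity L n)) sequentially"
    using unbounded unfolding filterlim_at_top_dense by blast
  then have ev: "eventually (\<lambda>n. 1 - ?bad n / real (complexity L n)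
      = ?good n / real (complexity L n)) sequentially"
  proof eventually_elim
    case (elim n)
    have "complexity L n = card {v \<in> words_of_length L n. ball_is_path L n v r}
        + card {v \<in> words_of_length L n. \<not> ball_is_path L n v r}"
      unfolding complexity_def
      using card_Int_Diff[OF finite_words_of_length[OF assms(1,2)], of n "{v. ball_is_path L n v r}"]
      by (simp add: Int_def set_diff_eq)
    then show ?case using elim by (simp add: field_simps)
  qed
  show "(\<lambda>n. ?good n / real (complexity L n)) \<longlonglongrightarrow> 1"
    using Lim_transform_eventually[OF lim ev] by simp
qed

lemma filterlim_at_top_if_powr_equivalent:
  fixes p :: "nat \<Rightarrow> real"
  assumes "0 < \<alpha>" "(\<lambda>n. p n / real n powr \<alpha>) \<longlonglongrightarrow> 1"
  shows "filterlim p at_top sequentially"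
proof -
  have "filterlim (\<lambda>n. exp (\<alpha> * ln (real n))) at_top sequentially"
    by (intro filterlim_compose[OF exp_at_top] filterlim_tendsto_pos_mult_at_top[OF tendsto_const assms(1)]
        filterlim_compose[OF ln_at_top filterlim_real_sequentially])
  then have lim: "filterlim (\<lambda>n. p n / real n powr \<alpha> * exp (\<alpha> * ln (real n))) at_top sequentially"
    by (rule filterlim_tendsto_pos_mult_at_top[OF assms(2) zero_less_one])
  have "eventually (\<lambda>n. p n / real n powr \<alpha> * exp (\<alpha> * ln (real n)) = p n) sequentially"
    using eventually_ge_at_top[of 1] by eventually_elim (simp add: powr_def)
  from filterlim_cong[OF refl refl this] lim show ?thesis by simp
qed

lemma ratio_tendsto_1_if_powr_equivalent:
  fixes p :: "nat \<Rightarrow> real"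
  assumes "(\<lambda>n. p n / real n powr \<alpha>) \<longlonglongrightarrow> 1"
  shows "(\<lambda>n. p (Suc n) / p n) \<longlonglongrightarrow> 1"
proof -
  have lim: "(\<lambda>n. p (Suc n) / real (Suc n) powr \<alpha> * (real (Suc n) / real n) powr \<alpha> / (p n / real n powr \<alpha>))
      \<longlonglongrightarrow> 1 * 1 powr \<alpha> / 1"
    by (intro tendsto_intros LIMSEQ_Suc[OF assms] assms LIMSEQ_Suc_n_over_n) simp_all
  have "eventually (\<lambda>n. p (Suc n) / real (Suc n) powr \<alpha> * (real (Suc n) / real n) powr \<alpha>
      / (p n / real n powr \<alpha>) = p (Suc n) / p n) sequentially"
    using eventually_ge_at_top[of 1] by eventually_elim (simp add: powr_divide)
  from Lim_transform_eventually[OF lim this] show ?thesis by simp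
qed

theorem corollary2p8:
  fixes A :: "'a set" and L :: "'a list set" and \<alpha> :: real
  assumes "finite A"
    and "L \<subseteq> lists A"
    and "factorial_lang L"
    and "almost_prolongable A L"
    and "\<alpha> \<ge> 1"
    and "(\<lambda>n. real (complexity L n) / real n powr \<alpha>) \<longlonglongrightarrow> 1"
  shows "rauzy_converges_to_Z L"
proof (rule rauzy_converges_to_Z_if_complexity_ratio_tendsto_1[OF assms(1-4)])
  show "filterlim (\<lambda>n. real (complexity L n)) at_top sequentially"
    using \<open>\<alpha> \<ge> 1\<close> by (intro filterlim_at_top_if_powr_equivalent[OF _ assms(6)]) simp
  show "(\<lambda>n. real (complexity L (Suc n)) / real (complexity L n)) \<longlonglongrightarrow> 1"
    by (rule ratio_tendsto_1_if_powr_equivalent[OF assms(6)])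
qed

end
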